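(* Let $\psi:\mathsf{Pol}\to\mathsf{N}$ be a linear map with $\psi(1)=\psi(x_i)=0$ for $1\le i\le n$, and let $\phi:\mathsf{N}\times\mathsf{N}\to\mathsf{N}$ be a bidifferential operator vanishing on constants (i.e. $\phi(c,f)=\phi(f,c)=0$ for constants $c$). Suppose that for every $k\ge2$ and every choice of indices $i_1,\dots,i_k\in\{1,\dots,n\}$, $$\sum_{(i_1,\ldots,i_k)}\delta\psi(x_{i_1},x_{i_2}\cdots x_{i_k})=\sum_{(i_1,\ldots,i_k)}\phi(x_{i_1},x_{i_2}\cdots x_{i_k}).$$ Then $\psi$ is the restriction to $\mathsf{Pol}$ of a differential operator on $\mathsf{N}$ vanishing on constants.
   Context: $\mathsf{N}=C^\infty(\mathbb{R}^n)$ with coordinates $x_1,\dots,x_n$, $\mathsf{Pol}=\mathbb{R}[x_1,\dots,x_n]$. The Hochschild coboundary of a linear map $\psi$ is $\delta\psi(f,g)=f\psi(g)-\psi(fg)+\psi(f)g$. For a function $F$ of $k$ arguments, $\sum_{(i_1,\ldots,i_k)}F(x_{i_1},\ldots,x_{i_k})$ denotes the sum over the $k$ cyclic permutations of $(x_{i_1},\ldots,x_{i_k})$; here the arguments are $x_{i_1}$ and the product $x_{i_2}\cdots x_{i_k}$ of the remaining cyclically ordered variables. *)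

theory Defs
  imports "HOL-Analysis.Analysis"
begin

text \<open>Functions on R^n are modelled as functions on real^'n (n = CARD('n)).\<close>

definition partial :: "'n::finite \<Rightarrow> (real^'n \<Rightarrow> real) \<Rightarrow> real^'n \<Rightarrow> real" where
  "partial i f x = deriv (\<lambda>t. f (x + t *\<^sub>R axis i 1)) 0"

fun dword :: "'n::finite list \<Rightarrow> (real^'n \<Rightarrow> real) \<Rightarrow> real^'n \<Rightarrow> real" where
  "dword [] f = f"
| "dword (i # w) f = partial i (dword w f)"

definition smooth :: "(real^'n::finite \<Rightarrow> real) \<Rightarrow> bool" where
  "smooth f \<longleftrightarrow> (\<forall>w x. dword w f differentiable (at x))"

definition mono_fun :: "('n::finite \<Rightarrow> nat) \<Rightarrow> real^'n \<Rightarrow> real" where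
  "mono_fun \<alpha> x = (\<Prod>i\<in>UNIV. (x $ i) ^ (\<alpha> i))"

definition is_pol :: "(real^'n::finite \<Rightarrow> real) \<Rightarrow> bool" where
  "is_pol p \<longleftrightarrow> (\<exists>S c. finite S \<and> p = (\<lambda>x. \<Sum>\<alpha>\<in>S. c \<alpha> * mono_fun \<alpha> x))"

definition diff_op :: "'n::finite list set \<Rightarrow> ('n list \<Rightarrow> real^'n \<Rightarrow> real)
    \<Rightarrow> (real^'n \<Rightarrow> real) \<Rightarrow> real^'n \<Rightarrow> real" where
  "diff_op W a f x = (\<Sum>w\<in>W. a w x * dword w f x)"

definition bidiff_op :: "('n::finite list \<times> 'n list) set \<Rightarrow> ('n list \<times> 'n list \<Rightarrow> real^'n \<Rightarrow> real)
    \<Rightarrow> (real^'n \<Rightarrow> real) \<Rightarrow> (real^'n \<Rightarrow> real) \<Rightarrow> real^'n \<Rightarrow> real" where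
  "bidiff_op W a f g x = (\<Sum>(u,v)\<in>W. a (u,v) x * dword u f x * dword v g x)"

definition hoch :: "((real^'n::finite \<Rightarrow> real) \<Rightarrow> (real^'n \<Rightarrow> real))
    \<Rightarrow> (real^'n \<Rightarrow> real) \<Rightarrow> (real^'n \<Rightarrow> real) \<Rightarrow> real^'n \<Rightarrow> real" where
  "hoch \<psi> f g x = f x * \<psi> g x - \<psi> (\<lambda>y. f y * g y) x + \<psi> f x * g x"

definition coord :: "'n::finite \<Rightarrow> real^'n \<Rightarrow> real" where
  "coord i x = x $ i"

definition coord_prod :: "'n::finite list \<Rightarrow> real^'n \<Rightarrow> real" where
  "coord_prod l x = prod_list (map (\<lambda>i. x $ i) l)"

text \<open>Cyclic sum over the k rotations of the index list: first argument x_{i1},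
  second argument the product of the remaining variables.\<close>
definition cyc_sum :: "((real^'n::finite \<Rightarrow> real) \<Rightarrow> (real^'n \<Rightarrow> real) \<Rightarrow> real^'n \<Rightarrow> real)
    \<Rightarrow> 'n list \<Rightarrow> real^'n \<Rightarrow> real" where
  "cyc_sum F is x = (\<Sum>j<length is. F (coord (hd (rotate j is))) (coord_prod (tl (rotate j is))) x)"

end

theory Submission
  imports Defs
begin

text \<open>
  For a linear map T call E(T, \<alpha>) = \<Sum>_i \<alpha>_i x_i T(x^(\<alpha> - e_i)) - |\<alpha>| T(x^\<alpha>) its Euler defect at
  the monomial x^\<alpha>. Since \<psi> kills the coordinates, the cyclic sum of \<delta>\<psi> over any word with
  exponent vector \<alpha> is E(\<psi>, \<alpha>). Since \<phi> kills constants in its first argument, the cyclic sum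
  of \<phi> only sees its terms a_([i],v) \<partial>_i f \<partial>_v g, and by Euler's identity for derivatives of
  monomials it equals the Euler defect of D = - \<Sum> a_([i],v) / (|v| + 1) \<partial>_v \<partial>_i. For |\<alpha>| > 0
  the Euler defect determines T(x^\<alpha>) from the values of T in lower degree, so \<psi> and D agree on
  all monomials by induction on the degree, hence on all polynomials.
\<close>

section \<open>Partial derivatives\<close>

lemma has_real_derivative_partial:
  assumes "f differentiable (at x)"
  shows "((\<lambda>t. f (x + t *\<^sub>R axis i 1)) has_real_derivative partial i f x) (at 0)"
proof -
  have "(\<lambda>t. x + t *\<^sub>R axis i (1::real)) differentiable (at 0)"
    by (auto intro!: derivative_intros)
  then have "(f \<circ> (\<lambda>t. x + t *\<^sub>R axis i 1)) differentiable (at 0)"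
    using differentiable_chain_at[of "\<lambda>t. x + t *\<^sub>R axis i 1" 0 f] assms by simp
  then show ?thesis
    unfolding partial_def by (simp add: DERIV_deriv_iff_real_differentiable o_def)
qed

lemma partial_lincomb:
  assumes "finite S" and "\<And>\<alpha> y. \<alpha> \<in> S \<Longrightarrow> F \<alpha> differentiable (at y)"
  shows "partial i (\<lambda>x. \<Sum>\<alpha>\<in>S. c \<alpha> * F \<alpha> x) = (\<lambda>x. \<Sum>\<alpha>\<in>S. c \<alpha> * partial i (F \<alpha>) x)"
proof
  fix x
  have "((\<lambda>t. \<Sum>\<alpha>\<in>S. c \<alpha> * F \<alpha> (x + t *\<^sub>R axis i 1)) has_real_derivative
          (\<Sum>\<alpha>\<in>S. c \<alpha> * partial i (F \<alpha>) x)) (at 0)"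
    using assms by (intro DERIV_sum DERIV_cmult has_real_derivative_partial)
  then show "partial i (\<lambda>x. \<Sum>\<alpha>\<in>S. c \<alpha> * F \<alpha> x) x = (\<Sum>\<alpha>\<in>S. c \<alpha> * partial i (F \<alpha>) x)"
    unfolding partial_def by (rule DERIV_imp_deriv)
qed

lemma partial_cmult:
  assumes "\<And>y. F differentiable (at y)"
  shows "partial i (\<lambda>x. c * F x) = (\<lambda>x. c * partial i F x)"
  using partial_lincomb[where S = "{()}" and F = "\<lambda>_. F" and c = "\<lambda>_. c"] assms by simp

lemma dword_lincomb:
  assumes "finite S" and "\<And>\<alpha>. \<alpha> \<in> S \<Longrightarrow> smooth (F \<alpha>)"
  shows "dword w (\<lambda>x. \<Sum>\<alpha>\<in>S. c \<alpha> * F \<alpha> x) = (\<lambda>x. \<Sum>\<alpha>\<in>S. c \<alpha> * dword w (F \<alpha>) x)"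
proof (induction w)
  case (Cons i w)
  have "\<And>\<alpha> y. \<alpha> \<in> S \<Longrightarrow> dword w (F \<alpha>) differentiable (at y)"
    using assms(2) by (simp add: smooth_def)
  then show ?case by (simp add: Cons.IH partial_lincomb[OF assms(1)])
qed simp

lemma dword_cmult:
  assumes "smooth F"
  shows "dword w (\<lambda>x. c * F x) = (\<lambda>x. c * dword w F x)"
  using dword_lincomb[where S = "{()}" and F = "\<lambda>_. F" and c = "\<lambda>_. c"] assms by simp

lemma smooth_cmult:
  assumes "smooth F"
  shows "smooth (\<lambda>x. c * F x)"
  using assms unfolding smooth_def dword_cmult[OF assms] by (auto intro: differentiable_mult)

lemma dword_append: "dword (v @ u) f = dword v (dword u f)"
  by (induction v) auto

lemma partial_const: "partial i (\<lambda>x. c) = (\<lambda>x. 0)"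
  unfolding partial_def by simp

lemma dword_const: "dword w (\<lambda>x. c) = (\<lambda>x. if w = [] then c else 0)"
  by (induction w) (auto simp: partial_const)

section \<open>Monomials\<close>

text \<open>For \<open>\<beta> i = 0\<close> the truncated subtraction makes \<open>exp_dec i \<beta> = \<beta>\<close>; it only occurs
  multiplied by \<open>\<beta> i\<close>.\<close>

definition exp_dec :: "'n \<Rightarrow> ('n \<Rightarrow> nat) \<Rightarrow> 'n \<Rightarrow> nat" where
  "exp_dec i \<beta> = \<beta>(i := \<beta> i - 1)"

definition mono_deg :: "('n::finite \<Rightarrow> nat) \<Rightarrow> nat" where
  "mono_deg \<beta> = (\<Sum>i\<in>UNIV. \<beta> i)"

lemma mono_fun_remove:
  "mono_fun \<beta> x = (x $ i) ^ \<beta> i * (\<Prod>j\<in>UNIV-{i}. (x $ j) ^ \<beta> j)"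
  unfolding mono_fun_def by (simp add: prod.remove[of UNIV i])

lemma mono_fun_exp_dec:
  "mono_fun (exp_dec i \<beta>) x = (x $ i) ^ (\<beta> i - 1) * (\<Prod>j\<in>UNIV-{i}. (x $ j) ^ \<beta> j)"
  unfolding mono_fun_def exp_dec_def by (simp add: prod.remove[of UNIV i])

lemma coord_mult_mono_fun_exp_dec:
  assumes "\<beta> i > 0"
  shows "x $ i * mono_fun (exp_dec i \<beta>) x = mono_fun \<beta> x"
proof -
  have "x $ i * (x $ i) ^ (\<beta> i - 1) = (x $ i) ^ \<beta> i"
    using assms by (metis Suc_diff_1 power_Suc)
  then show ?thesis
    by (simp add: mono_fun_exp_dec mono_fun_remove[of \<beta> x i] mult.assoc)
qed

lemma mono_deg_exp_dec:
  assumes "\<beta> i > 0"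
  shows "mono_deg \<beta> = Suc (mono_deg (exp_dec i \<beta>))"
  using assms unfolding mono_deg_def exp_dec_def by (simp add: sum.remove[of UNIV i])

lemma exp_dec_commute: "exp_dec l (exp_dec i \<beta>) = exp_dec i (exp_dec l \<beta>)"
  by (auto simp: exp_dec_def fun_eq_iff)

lemma exp_dec_coeff_symmetric:
  "real (\<beta> i) * real (exp_dec i \<beta> l) = real (\<beta> l) * real (exp_dec l \<beta> i)"
  by (cases "i = l") (auto simp: exp_dec_def)

lemma has_real_derivative_mono_fun:
  "((\<lambda>t. mono_fun \<beta> (x + t *\<^sub>R axis i 1)) has_real_derivative
      real (\<beta> i) * mono_fun (exp_dec i \<beta>) x) (at 0)"
proof -
  let ?C = "\<Prod>j\<in>UNIV-{i}. (x $ j) ^ \<beta> j"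
  have "mono_fun \<beta> (x + t *\<^sub>R axis i 1) = (x $ i + t) ^ \<beta> i * ?C" for t
    unfolding mono_fun_remove[of \<beta> _ i] by (auto simp: axis_def intro!: prod.cong)
  then show ?thesis
    by (auto simp: mono_fun_exp_dec intro!: derivative_eq_intros)
qed

lemma partial_mono_fun: "partial i (mono_fun \<beta>) = (\<lambda>x. real (\<beta> i) * mono_fun (exp_dec i \<beta>) x)"
  unfolding partial_def using has_real_derivative_mono_fun by (blast intro: DERIV_imp_deriv)

lemma differentiable_mono_fun: "mono_fun \<beta> differentiable (at x)"
  unfolding mono_fun_def differentiable_def
  by (rule exI, rule has_derivative_prod, rule has_derivative_power,
      rule bounded_linear.has_derivative[OF bounded_linear_vec_nth], rule has_derivative_ident)

lemma smooth_mono_fun: "smooth (mono_fun \<beta>)"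
proof -
  have "\<exists>c \<gamma>. dword w (mono_fun \<beta>) = (\<lambda>x. c * mono_fun \<gamma> x)" for w
  proof (induction w)
    case Nil
    show ?case by (rule exI[of _ 1], rule exI[of _ \<beta>]) simp
  next
    case (Cons i w)
    then obtain c \<gamma> where "dword w (mono_fun \<beta>) = (\<lambda>x. c * mono_fun \<gamma> x)" by blast
    then have "dword (i # w) (mono_fun \<beta>) = (\<lambda>x. (c * real (\<gamma> i)) * mono_fun (exp_dec i \<gamma>) x)"
      by (simp add: partial_cmult differentiable_mono_fun partial_mono_fun mult.assoc)
    then show ?case by blast
  qed
  then show ?thesis
    unfolding smooth_def
    by (metis (no_types) differentiable_mult[OF differentiable_const differentiable_mono_fun])
qed

lemma dword_snoc_mono_fun:
  "dword (v @ [l]) (mono_fun \<gamma>) = (\<lambda>x. real (\<gamma> l) * dword v (mono_fun (exp_dec l \<gamma>)) x)"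
  by (simp add: dword_append partial_mono_fun dword_cmult smooth_mono_fun)

lemma one_eq_mono_fun: "(\<lambda>x. 1) = mono_fun (\<lambda>j. 0)"
  by (simp add: mono_fun_def fun_eq_iff)

lemma coord_eq_mono_fun: "coord i = mono_fun (\<lambda>j. if j = i then 1 else 0)"
  by (auto simp: coord_def mono_fun_def fun_eq_iff if_distrib prod.If_cases)

lemma smooth_coord: "smooth (coord i)"
  by (simp add: coord_eq_mono_fun smooth_mono_fun)

lemma dword_coord:
  "dword u (coord i) = (\<lambda>x. if u = [] then x $ i else if u = [i] then 1 else 0)"
proof (cases u rule: rev_cases)
  case (snoc v l)
  have "(\<lambda>j. if j = i then 1 else 0 :: nat)(i := 0) = (\<lambda>j. 0)"
    by auto
  then have "partial l (coord i) = (\<lambda>x. if l = i then 1 else 0)"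
    by (simp add: coord_eq_mono_fun partial_mono_fun exp_dec_def flip: one_eq_mono_fun)
  then show ?thesis
    using snoc by (auto simp: dword_append dword_const)
qed (simp add: coord_def fun_eq_iff)

section \<open>The Euler defect\<close>

lemma euler_dword_mono_fun:
  "(\<Sum>i\<in>UNIV. real (\<beta> i) * x $ i * dword v (mono_fun (exp_dec i \<beta>)) x)
     = (real (mono_deg \<beta>) - real (length v)) * dword v (mono_fun \<beta>) x"
proof (induction v arbitrary: \<beta> rule: rev_induct)
  case Nil
  have "real (\<beta> i) * x $ i * mono_fun (exp_dec i \<beta>) x = real (\<beta> i) * mono_fun \<beta> x" for i
    by (cases "\<beta> i = 0") (simp_all add: coord_mult_mono_fun_exp_dec mult.assoc)
  then have "(\<Sum>i\<in>UNIV. real (\<beta> i) * x $ i * mono_fun (exp_dec i \<beta>) x)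
      = (\<Sum>i\<in>UNIV. real (\<beta> i) * mono_fun \<beta> x)"
    by (intro sum.cong) simp_all
  then show ?case by (simp add: mono_deg_def sum_distrib_right)
next
  case (snoc l v)
  have summand: "real (\<beta> i) * x $ i * dword (v @ [l]) (mono_fun (exp_dec i \<beta>)) x
      = real (\<beta> l) * (real (exp_dec l \<beta> i) * x $ i
          * dword v (mono_fun (exp_dec i (exp_dec l \<beta>))) x)" for i
  proof -
    have "real (\<beta> i) * x $ i * dword (v @ [l]) (mono_fun (exp_dec i \<beta>)) x
        = (real (\<beta> i) * real (exp_dec i \<beta> l)) * x $ i
            * dword v (mono_fun (exp_dec l (exp_dec i \<beta>))) x"
      by (simp add: dword_snoc_mono_fun mult_ac)
    then show ?thesis
      by (simp add: exp_dec_coeff_symmetric[of \<beta> i l] exp_dec_commute[of l i] mult_ac)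
  qed
  have "(\<Sum>i\<in>UNIV. real (\<beta> i) * x $ i * dword (v @ [l]) (mono_fun (exp_dec i \<beta>)) x)
      = real (\<beta> l) * ((real (mono_deg (exp_dec l \<beta>)) - real (length v))
          * dword v (mono_fun (exp_dec l \<beta>)) x)"
    by (simp only: summand snoc.IH flip: sum_distrib_left)
  also have "\<dots> = (real (mono_deg \<beta>) - real (length (v @ [l]))) * dword (v @ [l]) (mono_fun \<beta>) x"
    using mono_deg_exp_dec[of \<beta> l]
    by (cases "\<beta> l = 0") (simp_all add: dword_snoc_mono_fun algebra_simps)
  finally show ?case .
qed

definition euler_defect :: "((real^'n::finite \<Rightarrow> real) \<Rightarrow> real^'n \<Rightarrow> real)
    \<Rightarrow> ('n \<Rightarrow> nat) \<Rightarrow> real^'n \<Rightarrow> real" where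
  "euler_defect T \<alpha> x = (\<Sum>i\<in>UNIV. real (\<alpha> i) * x $ i * T (mono_fun (exp_dec i \<alpha>)) x)
     - real (mono_deg \<alpha>) * T (mono_fun \<alpha>) x"

lemma euler_defect_dword_snoc:
  "euler_defect (dword (v @ [l])) \<alpha> x
     = - (real (length v) + 1) * real (\<alpha> l) * dword v (mono_fun (exp_dec l \<alpha>)) x"
  unfolding euler_defect_def euler_dword_mono_fun by (simp add: dword_snoc_mono_fun algebra_simps)

lemma euler_defect_diff_op:
  "euler_defect (diff_op V b) \<alpha> x = (\<Sum>w\<in>V. b w x * euler_defect (dword w) \<alpha> x)"
  unfolding euler_defect_def diff_op_def right_diff_distrib sum_subtractf sum_distrib_left
  by (subst sum.swap) (simp add: sum_distrib_left mult_ac)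

lemma eq_on_mono_fun_by_euler_defect:
  assumes "S (mono_fun (\<lambda>_. 0)) = T (mono_fun (\<lambda>_. 0))"
    and "\<And>\<alpha>. euler_defect S \<alpha> = euler_defect T \<alpha>"
  shows "S (mono_fun \<alpha>) = T (mono_fun \<alpha>)"
proof (induction "mono_deg \<alpha>" arbitrary: \<alpha> rule: less_induct)
  case less
  show ?case
  proof (cases "mono_deg \<alpha> = 0")
    case True
    then have "\<alpha> = (\<lambda>_. 0)" by (simp add: mono_deg_def fun_eq_iff)
    with assms(1) show ?thesis by simp
  next
    case False
    have lower: "real (\<alpha> i) * x $ i * S (mono_fun (exp_dec i \<alpha>)) x
        = real (\<alpha> i) * x $ i * T (mono_fun (exp_dec i \<alpha>)) x" for i x
      using less mono_deg_exp_dec[of \<alpha> i] by (cases "\<alpha> i = 0") auto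
    have "real (mono_deg \<alpha>) * S (mono_fun \<alpha>) x = real (mono_deg \<alpha>) * T (mono_fun \<alpha>) x" for x
      using fun_cong[OF assms(2)[of \<alpha>], of x] by (simp add: euler_defect_def lower)
    with False show ?thesis by (simp add: fun_eq_iff)
  qed
qed

section \<open>Cyclic sums\<close>

definition exps_of :: "'n list \<Rightarrow> 'n \<Rightarrow> nat" where
  "exps_of xs = (\<lambda>i. count (mset xs) i)"

lemma ex_exps_of: "\<exists>xs. exps_of xs = (\<alpha> :: 'n::finite \<Rightarrow> nat)"
proof -
  obtain xs where "mset xs = Abs_multiset \<alpha>"
    using ex_mset by blast
  then have "exps_of xs = \<alpha>"
    by (simp add: exps_of_def count_Abs_multiset)
  then show ?thesis ..
qed

lemma coord_prod_eq_mono_fun: "coord_prod xs = mono_fun (exps_of xs)"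
proof (induction xs)
  case Nil
  show ?case by (simp add: coord_prod_def exps_of_def flip: one_eq_mono_fun)
next
  case (Cons l xs)
  have "exp_dec l (exps_of (l # xs)) = exps_of xs"
    by (auto simp: exp_dec_def exps_of_def fun_eq_iff)
  then have "x $ l * coord_prod xs x = mono_fun (exps_of (l # xs)) x" for x
    using Cons coord_mult_mono_fun_exp_dec[of "exps_of (l # xs)" l x] by (simp add: exps_of_def)
  then show ?case by (simp add: coord_prod_def fun_eq_iff)
qed

lemma sum_nth_eq_sum_exps_of:
  fixes G :: "'n::finite \<Rightarrow> real"
  shows "(\<Sum>j<length xs. G (xs ! j)) = (\<Sum>i\<in>UNIV. real (exps_of xs i) * G i)"
proof (induction xs)
  case (Cons l xs)
  have "(\<Sum>j<length (l # xs). G ((l # xs) ! j)) = G l + (\<Sum>i\<in>UNIV. real (exps_of xs i) * G i)"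
    unfolding length_Cons sum.lessThan_Suc_shift by (simp add: Cons.IH)
  also have "\<dots> = (\<Sum>i\<in>UNIV. real (exps_of xs i) * G i + (if i = l then G i else 0))"
    by (simp add: sum.distrib)
  also have "\<dots> = (\<Sum>i\<in>UNIV. real (exps_of (l # xs) i) * G i)"
    by (rule sum.cong) (auto simp: exps_of_def algebra_simps)
  finally show ?case .
qed (simp add: exps_of_def)

lemma hd_rotate_less: "j < length xs \<Longrightarrow> hd (rotate j xs) = xs ! j"
  by (cases xs) (simp_all add: hd_rotate_conv_nth)

lemma exps_of_tl_rotate:
  assumes "j < length xs"
  shows "exps_of (tl (rotate j xs)) = exp_dec (xs ! j) (exps_of xs)"
proof -
  have "rotate j xs = xs ! j # tl (rotate j xs)"
    using assms by (metis hd_rotate_less list.collapse list.size(3) not_less0 rotate_is_Nil_conv)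
  moreover have "mset (rotate j xs) = mset xs"
    by (metis append_take_drop_id mset_append rotate_drop_take union_commute)
  ultimately have "mset xs = add_mset (xs ! j) (mset (tl (rotate j xs)))"
    by (metis mset.simps(2))
  then show ?thesis
    by (auto simp: exps_of_def exp_dec_def fun_eq_iff)
qed

lemma cyc_sum_eq_sum_exps_of:
  "cyc_sum F xs x
     = (\<Sum>i\<in>UNIV. real (exps_of xs i) * F (coord i) (mono_fun (exp_dec i (exps_of xs))) x)"
proof -
  have "cyc_sum F xs x
      = (\<Sum>j<length xs. F (coord (xs ! j)) (mono_fun (exp_dec (xs ! j) (exps_of xs))) x)"
    unfolding cyc_sum_def
    by (intro sum.cong) (auto simp: hd_rotate_less exps_of_tl_rotate coord_prod_eq_mono_fun)
  then show ?thesis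
    using sum_nth_eq_sum_exps_of[where G = "\<lambda>i. F (coord i) (mono_fun (exp_dec i (exps_of xs))) x"]
    by simp
qed

lemma cyc_sum_short:
  assumes "length xs < 2" and "\<And>l. F (coord l) (\<lambda>x. 1) = G (coord l) (\<lambda>x. 1)"
  shows "cyc_sum F xs = cyc_sum G xs"
proof -
  have one: "coord_prod [] = (\<lambda>x. 1)"
    by (simp add: coord_prod_def fun_eq_iff)
  from assms(1) consider "xs = []" | l where "xs = [l]"
    by (cases xs) auto
  then show ?thesis
    by cases (simp_all add: cyc_sum_def assms(2) one fun_eq_iff)
qed

lemma cyc_sum_hoch:
  assumes "\<And>i. T (coord i) = (\<lambda>x. 0)"
  shows "cyc_sum (hoch T) xs x = euler_defect T (exps_of xs) x"
proof -
  let ?\<alpha> = "exps_of xs"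
  have summand: "real (?\<alpha> i) * hoch T (coord i) (mono_fun (exp_dec i ?\<alpha>)) x
      = real (?\<alpha> i) * x $ i * T (mono_fun (exp_dec i ?\<alpha>)) x - real (?\<alpha> i) * T (mono_fun ?\<alpha>) x" for i
  proof (cases "?\<alpha> i = 0")
    case False
    then have "(\<lambda>y. coord i y * mono_fun (exp_dec i ?\<alpha>) y) = mono_fun ?\<alpha>"
      by (simp add: fun_eq_iff coord_def coord_mult_mono_fun_exp_dec)
    then show ?thesis by (simp add: hoch_def assms coord_def algebra_simps)
  qed simp
  show ?thesis
    unfolding cyc_sum_eq_sum_exps_of summand sum_subtractf euler_defect_def mono_deg_def
    by (simp add: sum_distrib_right)
qed

definition first_order_left :: "('n list \<times> 'n list) set \<Rightarrow> ('n \<times> 'n list) set" where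
  "first_order_left W = (\<lambda>(i, v). ([i], v)) -` W"

lemma finite_first_order_left: "finite W \<Longrightarrow> finite (first_order_left W)"
  unfolding first_order_left_def by (rule finite_vimageI) (auto simp: inj_on_def)

lemma bidiff_op_coord_left:
  assumes "finite W"
    and const_l: "\<And>c f. smooth f \<Longrightarrow> bidiff_op W a (\<lambda>x. c) f = (\<lambda>x. 0)"
    and "smooth g"
  shows "bidiff_op W a (coord i) g x = (\<Sum>v\<in>Pair [i] -` W. a ([i], v) x * dword v g x)"
proof -
  have zero: "(\<Sum>uv\<in>W. a uv x * (if fst uv = [] then 1 else 0) * dword (snd uv) g x) = 0"
    using fun_cong[OF const_l[OF \<open>smooth g\<close>, of 1], of x]
    by (simp add: bidiff_op_def dword_const case_prod_unfold)
  have "bidiff_op W a (coord i) g x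
      = (\<Sum>uv\<in>W. x $ i * (a uv x * (if fst uv = [] then 1 else 0) * dword (snd uv) g x)
          + (if fst uv = [i] then a uv x * dword (snd uv) g x else 0))"
    unfolding bidiff_op_def case_prod_unfold dword_coord by (intro sum.cong) auto
  also have "\<dots> = (\<Sum>uv\<in>W. if fst uv = [i] then a uv x * dword (snd uv) g x else 0)"
    by (simp add: sum.distrib zero flip: sum_distrib_left)
  also have "\<dots> = (\<Sum>uv\<in>{uv\<in>W. fst uv = [i]}. a uv x * dword (snd uv) g x)"
    by (rule sum.inter_filter[OF assms(1), symmetric])
  also have "\<dots> = (\<Sum>v\<in>Pair [i] -` W. a ([i], v) x * dword v g x)"
    by (rule sum.reindex_bij_witness[where i = "Pair [i]" and j = snd]) auto
  finally show ?thesis .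
qed

lemma cyc_sum_bidiff_op:
  assumes "finite W" and "\<And>c f. smooth f \<Longrightarrow> bidiff_op W a (\<lambda>x. c) f = (\<lambda>x. 0)"
  shows "cyc_sum (bidiff_op W a) xs x
    = (\<Sum>(i, v)\<in>first_order_left W.
         real (exps_of xs i) * a ([i], v) x * dword v (mono_fun (exp_dec i (exps_of xs))) x)"
proof -
  let ?\<alpha> = "exps_of xs"
  have "cyc_sum (bidiff_op W a) xs x
      = (\<Sum>i\<in>UNIV. \<Sum>v\<in>Pair [i] -` W.
           real (?\<alpha> i) * a ([i], v) x * dword v (mono_fun (exp_dec i ?\<alpha>)) x)"
    by (simp add: cyc_sum_eq_sum_exps_of bidiff_op_coord_left[OF assms smooth_mono_fun]
        sum_distrib_left mult.assoc)
  also have "\<dots> = (\<Sum>(i, v)\<in>Sigma UNIV (\<lambda>i. Pair [i] -` W).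
           real (?\<alpha> i) * a ([i], v) x * dword v (mono_fun (exp_dec i ?\<alpha>)) x)"
    using assms(1) by (intro sum.Sigma) (auto intro!: finite_vimageI simp: inj_on_def)
  also have "Sigma UNIV (\<lambda>i. Pair [i] -` W) = first_order_left W"
    by (auto simp: first_order_left_def)
  finally show ?thesis .
qed

section \<open>The primitive operator\<close>

definition primitive_words :: "('n list \<times> 'n list) set \<Rightarrow> 'n list set" where
  "primitive_words W = (\<lambda>(i, v). v @ [i]) ` first_order_left W"

text \<open>The word \<open>v @ [i]\<close> gets the coefficient \<open>-a ([i], v) / (|v| + 1)\<close>, which cancels the
  factor \<open>-(|v| + 1)\<close> of \<open>euler_defect_dword_snoc\<close>.\<close>

definition primitive_coeff ::
    "('n list \<times> 'n list \<Rightarrow> real^'n::finite \<Rightarrow> real) \<Rightarrow> 'n list \<Rightarrow> real^'n \<Rightarrow> real" where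
  "primitive_coeff a w x = - a ([last w], butlast w) x / real (length w)"

lemma primitive_coeff_snoc:
  "primitive_coeff a (v @ [i]) = (\<lambda>x. (- 1 / (real (length v) + 1)) * a ([i], v) x)"
  by (simp add: primitive_coeff_def fun_eq_iff)

lemma sum_primitive_words:
  "(\<Sum>w\<in>primitive_words W. f w) = (\<Sum>(i, v)\<in>first_order_left W. f (v @ [i]))"
  unfolding primitive_words_def by (subst sum.reindex) (auto simp: inj_on_def case_prod_unfold)

lemma finite_primitive_words: "finite W \<Longrightarrow> finite (primitive_words W)"
  by (simp add: primitive_words_def finite_first_order_left)

lemma smooth_primitive_coeff:
  assumes "\<And>uv. uv \<in> W \<Longrightarrow> smooth (a uv)" and "w \<in> primitive_words W"
  shows "smooth (primitive_coeff a w)"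
proof -
  obtain i v where "([i], v) \<in> W" and w: "w = v @ [i]"
    using assms(2) by (auto simp: primitive_words_def first_order_left_def)
  then show ?thesis
    unfolding w primitive_coeff_snoc by (intro smooth_cmult assms(1))
qed

lemma diff_op_primitive_words_const: "diff_op (primitive_words W) b (\<lambda>x. c) = (\<lambda>x. 0)"
  by (auto simp: diff_op_def dword_const primitive_words_def fun_eq_iff intro!: sum.neutral)

lemma euler_defect_primitive:
  "euler_defect (diff_op (primitive_words W) (primitive_coeff a)) \<alpha> x
    = (\<Sum>(i, v)\<in>first_order_left W. real (\<alpha> i) * a ([i], v) x * dword v (mono_fun (exp_dec i \<alpha>)) x)"
  unfolding euler_defect_diff_op sum_primitive_words
  by (intro sum.cong) (auto simp: primitive_coeff_snoc euler_defect_dword_snoc field_simps)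

lemma lincomb_mono_fun_is_pol: "finite S \<Longrightarrow> is_pol (\<lambda>x. \<Sum>\<alpha>\<in>S. c \<alpha> * mono_fun \<alpha> x)"
  unfolding is_pol_def by blast

lemma pol_linear_lincomb_mono_fun:
  fixes T :: "(real^'n::finite \<Rightarrow> real) \<Rightarrow> real^'n \<Rightarrow> real"
  assumes add: "\<And>p q. is_pol p \<Longrightarrow> is_pol q \<Longrightarrow> T (\<lambda>x. p x + q x) = (\<lambda>x. T p x + T q x)"
    and smult: "\<And>c p. is_pol p \<Longrightarrow> T (\<lambda>x. c * p x) = (\<lambda>x. c * T p x)"
    and "finite S"
  shows "T (\<lambda>x. \<Sum>\<alpha>\<in>S. c \<alpha> * mono_fun \<alpha> x) = (\<lambda>x. \<Sum>\<alpha>\<in>S. c \<alpha> * T (mono_fun \<alpha>) x)"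
  using \<open>finite S\<close>
proof (induction S rule: finite_induct)
  case empty
  have "is_pol (mono_fun (\<lambda>_. 0))"
    using lincomb_mono_fun_is_pol[of "{\<lambda>_. 0}" "\<lambda>_. 1"] by simp
  then show ?case
    using smult[of _ 0] by simp
next
  case (insert \<beta> S)
  have "is_pol (\<lambda>x. c \<beta> * mono_fun \<beta> x)"
    using lincomb_mono_fun_is_pol[of "{\<beta>}"] by simp
  moreover have "is_pol (mono_fun \<beta>)"
    using lincomb_mono_fun_is_pol[of "{\<beta>}" "\<lambda>_. 1"] by simp
  ultimately show ?case
    using insert add[OF _ lincomb_mono_fun_is_pol[OF insert(1)]] smult by simp
qed

lemma diff_op_lincomb_mono_fun:
  assumes "finite S"
  shows "diff_op V b (\<lambda>x. \<Sum>\<alpha>\<in>S. c \<alpha> * mono_fun \<alpha> x)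
    = (\<lambda>x. \<Sum>\<alpha>\<in>S. c \<alpha> * diff_op V b (mono_fun \<alpha>) x)"
  unfolding diff_op_def dword_lincomb[OF assms smooth_mono_fun] sum_distrib_left
  by (subst sum.swap) (simp add: mult_ac)

lemma pol_eq_diff_op_by_mono_fun:
  fixes T :: "(real^'n::finite \<Rightarrow> real) \<Rightarrow> real^'n \<Rightarrow> real"
  assumes "\<And>p q. is_pol p \<Longrightarrow> is_pol q \<Longrightarrow> T (\<lambda>x. p x + q x) = (\<lambda>x. T p x + T q x)"
    and "\<And>c p. is_pol p \<Longrightarrow> T (\<lambda>x. c * p x) = (\<lambda>x. c * T p x)"
    and on_mono: "\<And>\<alpha>. T (mono_fun \<alpha>) = diff_op V b (mono_fun \<alpha>)"
    and "is_pol p"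
  shows "T p = diff_op V b p"
proof -
  obtain S c where S: "finite S" and p: "p = (\<lambda>x. \<Sum>\<alpha>\<in>S. c \<alpha> * mono_fun \<alpha> x)"
    using \<open>is_pol p\<close> unfolding is_pol_def by blast
  have "T p = (\<lambda>x. \<Sum>\<alpha>\<in>S. c \<alpha> * T (mono_fun \<alpha>) x)"
    unfolding p by (rule pol_linear_lincomb_mono_fun[where T = T, OF assms(1,2) S])
  also have "\<dots> = diff_op V b p"
    unfolding p diff_op_lincomb_mono_fun[OF S] on_mono ..
  finally show ?thesis .
qed

theorem lemma2:
  fixes \<psi> :: "(real^'n::finite \<Rightarrow> real) \<Rightarrow> (real^'n \<Rightarrow> real)"
    and W :: "('n list \<times> 'n list) set"
    and a :: "'n list \<times> 'n list \<Rightarrow> real^'n \<Rightarrow> real"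
  assumes psi_add: "\<And>p q. is_pol p \<Longrightarrow> is_pol q \<Longrightarrow> \<psi> (\<lambda>x. p x + q x) = (\<lambda>x. \<psi> p x + \<psi> q x)"
    and psi_smult: "\<And>c p. is_pol p \<Longrightarrow> \<psi> (\<lambda>x. c * p x) = (\<lambda>x. c * \<psi> p x)"
    and psi_smooth: "\<And>p. is_pol p \<Longrightarrow> smooth (\<psi> p)"
    and psi_one: "\<psi> (\<lambda>x. 1) = (\<lambda>x. 0)"
    and psi_coord: "\<And>i. \<psi> (coord i) = (\<lambda>x. 0)"
    and W_fin: "finite W"
    and a_smooth: "\<And>uv. uv \<in> W \<Longrightarrow> smooth (a uv)"
    and phi_const_l: "\<And>c f. smooth f \<Longrightarrow> bidiff_op W a (\<lambda>x. c) f = (\<lambda>x. 0)"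
    and phi_const_r: "\<And>c f. smooth f \<Longrightarrow> bidiff_op W a f (\<lambda>x. c) = (\<lambda>x. 0)"
    and cyc: "\<And>is. length is \<ge> 2 \<Longrightarrow> cyc_sum (hoch \<psi>) is = cyc_sum (bidiff_op W a) is"
  shows "\<exists>V b. finite V \<and> (\<forall>w\<in>V. smooth (b w))
           \<and> (\<forall>c. diff_op V b (\<lambda>x. c) = (\<lambda>x. 0))
           \<and> (\<forall>p. is_pol p \<longrightarrow> \<psi> p = diff_op V b p)"
proof -
  let ?D = "diff_op (primitive_words W) (primitive_coeff a)"
  have cyc_all: "cyc_sum (hoch \<psi>) xs = cyc_sum (bidiff_op W a) xs" for xs
  proof (cases "length xs < 2")
    case True
    have "hoch \<psi> (coord l) (\<lambda>x. 1) = bidiff_op W a (coord l) (\<lambda>x. 1)" for l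
      by (simp add: hoch_def psi_one psi_coord phi_const_r[OF smooth_coord] fun_eq_iff)
    with True show ?thesis by (rule cyc_sum_short)
  qed (simp add: cyc)
  have defect: "euler_defect \<psi> \<alpha> = euler_defect ?D \<alpha>" for \<alpha>
  proof
    fix x
    obtain xs where "exps_of xs = \<alpha>"
      using ex_exps_of by blast
    then show "euler_defect \<psi> \<alpha> x = euler_defect ?D \<alpha> x"
      using cyc_sum_hoch[of \<psi>, OF psi_coord, of xs x] cyc_all[of xs]
        cyc_sum_bidiff_op[OF W_fin phi_const_l, of xs x]
      by (simp add: euler_defect_primitive)
  qed
  have on_mono: "\<psi> (mono_fun \<alpha>) = ?D (mono_fun \<alpha>)" for \<alpha>
    by (rule eq_on_mono_fun_by_euler_defect[OF _ defect])
      (simp add: psi_one diff_op_primitive_words_const flip: one_eq_mono_fun)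
  show ?thesis
  proof (intro exI[of _ "primitive_words W"] exI[of _ "primitive_coeff a"] conjI ballI allI impI)
    show "\<psi> p = ?D p" if "is_pol p" for p
      using psi_add psi_smult on_mono that by (rule pol_eq_diff_op_by_mono_fun)
  qed (simp_all add: finite_primitive_words[OF W_fin] smooth_primitive_coeff[OF a_smooth]
        diff_op_primitive_words_const)
qed

end
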